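(* Let $q\in X^*\setminus\{e\}$ and let $\lambda_q$ be the largest positive real root of $\mathfrak{p}_q(t):=t^{|q|}-\sum_{v\in\sqrt[*]{P_q}}t^{|q|-|v|}$. There is a constant $c>0$ depending only on $q$ such that every $\xi\in X^\omega$ that is quasiperiodic with quasiperiod $q$ satisfies $f(\xi,n)\le c\cdot\lambda_q^n$ for all $n\in\mathbb{N}$.
   Context: $X$ is a finite alphabet with $|X|\ge2$; $X^*$ the finite words (empty word $e$), $X^\omega$ the infinite words, $X^n$ the words of length $n$. $w\sqsubseteq\eta$ means $w$ is a prefix of $\eta$, $w\sqsubset\eta$ a proper prefix. An $\omega$-word $\xi$ is quasiperiodic with quasiperiod $q$ if for every $j\in\mathbb{N}$ there is a prefix $u_j\sqsubseteq\xi$ with $j-|q|<|u_j|\le j$ and $u_j\cdot q\sqsubseteq\xi$. $f(\xi,n):=|\mathrm{infix}(\xi)\cap X^n|$ is the number of distinct factors (subwords) of $\xi$ of length $n$. $P_q:=\{v: e\sqsubset v\sqsubseteq q\sqsubset v\cdot q\}$, and $\sqrt[*]{P_q}:=P_q\setminus(P_q^2\cdot P_q^* )$ (elements of $P_q$ not a concatenation of two or more elements of $P_q$). *)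

theory Defs
  imports Complex_Main "HOL-Library.Sublist" "HOL-Library.Cardinality"
begin

definition oprefix :: "'a list \<Rightarrow> (nat \<Rightarrow> 'a) \<Rightarrow> bool" where
  "oprefix w \<xi> \<longleftrightarrow> (\<forall>i < length w. w ! i = \<xi> i)"

definition quasiperiodic :: "(nat \<Rightarrow> 'a) \<Rightarrow> 'a list \<Rightarrow> bool" where
  "quasiperiodic \<xi> q \<longleftrightarrow>
     (\<forall>j::nat. \<exists>u. oprefix u \<xi> \<and> int j - int (length q) < int (length u)
                 \<and> length u \<le> j \<and> oprefix (u @ q) \<xi>)"

definition infixes :: "(nat \<Rightarrow> 'a) \<Rightarrow> 'a list set" where
  "infixes \<xi> = {map \<xi> [i..<i+n] | i n. True}"

definition subword_complexity :: "(nat \<Rightarrow> 'a) \<Rightarrow> nat \<Rightarrow> nat" where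
  "subword_complexity \<xi> n = card (infixes \<xi> \<inter> {w. length w = n})"

definition Pq :: "'a list \<Rightarrow> 'a list set" where
  "Pq q = {v. v \<noteq> [] \<and> prefix v q \<and> strict_prefix q (v @ q)}"

definition star_root :: "'a list set \<Rightarrow> 'a list set" where
  "star_root P = P - {concat ws | ws. length ws \<ge> 2 \<and> set ws \<subseteq> P}"

definition char_poly :: "'a list \<Rightarrow> real \<Rightarrow> real" where
  "char_poly q t = t ^ length q - (\<Sum>v\<in>star_root (Pq q). t ^ (length q - length v))"

definition lambda_q :: "'a list \<Rightarrow> real" where
  "lambda_q q = Max {t. t > 0 \<and> char_poly q t = 0}"

end

theory Submission
  imports Defs
begin

(* Let R be the star root of P_q and L = |q|.  In a q-quasiperiodic word
   two consecutive occurrences of q start at distance d with 0 < d <= L, and the word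
   between their starts lies in P_q; every element of P_q is a concatenation of
   elements of R.  Hence every factor starting at an occurrence of q is a prefix of a
   concatenation of elements of R, and every factor of length n is obtained from such a
   factor of length n + k (k < L) by dropping its first k letters.
   The words of length n that are prefixes of concatenations over R are counted by
   splitting off the first block: if lam >= 1 and sum_{r in R} lam^(L-|r|) <= lam^L,
   there are at most lam^(n+L) of them.  Finally lambda_q is the unique positive root
   of the characteristic polynomial, it is >= 1 and satisfies this equation, so the
   theorem follows with c = L * lambda_q^(2L). *)

section \<open>Prefixes of concatenations and their number\<close>

definition prefix_lang :: "'a list set \<Rightarrow> nat \<Rightarrow> 'a list set" where
  "prefix_lang R n = {w. length w = n \<and> (\<exists>ws. set ws \<subseteq> R \<and> prefix w (concat ws))}"

lemma finite_prefix_lang: "finite (prefix_lang (R :: 'a::finite list set) n)"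
proof (rule finite_subset)
  show "prefix_lang R n \<subseteq> {xs. set xs \<subseteq> UNIV \<and> length xs = n}"
    by (auto simp: prefix_lang_def)
qed (rule finite_lists_length_eq, simp)

lemma prefix_lang_first_block:
  assumes "n > 0"
  shows "prefix_lang R n \<subseteq>
           (\<Union>r\<in>{r\<in>R. length r \<le> n}. (\<lambda>w. r @ w) ` prefix_lang R (n - length r))
           \<union> take n ` {r\<in>R. n < length r}"
proof
  fix w assume "w \<in> prefix_lang R n"
  then obtain ws where w: "length w = n" "set ws \<subseteq> R" "prefix w (concat ws)"
    by (auto simp: prefix_lang_def)
  then obtain r rest where ws: "ws = r # rest" using assms by (cases ws) auto
  have r: "r \<in> R" "set rest \<subseteq> R" using w ws by auto
  have split: "prefix w r \<or> (\<exists>us. w = r @ us \<and> prefix us (concat rest))"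
    using w(3) ws by (simp add: prefix_append)
  show "w \<in> (\<Union>r\<in>{r\<in>R. length r \<le> n}. (\<lambda>w. r @ w) ` prefix_lang R (n - length r))
            \<union> take n ` {r\<in>R. n < length r}"
  proof (cases "length r \<le> n")
    case True
    have "w = r" if "prefix w r"
      using that True w(1) by (metis prefix_length_le prefix_length_prefix prefix_order.antisym prefix_order.refl le_antisym)
    then obtain us where us: "w = r @ us" "prefix us (concat rest)"
      using split by (metis append_Nil2 Nil_prefix)
    then have "us \<in> prefix_lang R (n - length r)" using w(1) r by (auto simp: prefix_lang_def)
    then show ?thesis using us r True by force
  next
    case False
    with split w(1) have "w = take n r" by (auto simp: prefix_def)
    then show ?thesis using r False by force
  qed
qed

lemma card_prefix_lang_recurrence:
  fixes R :: "'a::finite list set"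
  assumes "finite R" and "n > 0"
  shows "card (prefix_lang R n) \<le>
           (\<Sum>r\<in>{r\<in>R. length r \<le> n}. card (prefix_lang R (n - length r)))
           + card {r\<in>R. n < length r}"
proof -
  let ?A = "{r\<in>R. length r \<le> n}" and ?B = "{r\<in>R. n < length r}"
  let ?C = "\<Union>r\<in>?A. (\<lambda>w. r @ w) ` prefix_lang R (n - length r)"
  have "card (prefix_lang R n) \<le> card (?C \<union> take n ` ?B)"
    using prefix_lang_first_block[of n R] assms
    by (intro card_mono) (auto intro!: finite_prefix_lang)
  also have "\<dots> \<le> card ?C + card (take n ` ?B)"
    by (rule card_Un_le)
  also have "\<dots> \<le> (\<Sum>r\<in>?A. card ((\<lambda>w. r @ w) ` prefix_lang R (n - length r))) + card ?B"
    using assms(1) by (intro add_mono card_UN_le card_image_le) auto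
  also have "\<dots> \<le> (\<Sum>r\<in>?A. card (prefix_lang R (n - length r))) + card ?B"
    by (intro add_mono sum_mono card_image_le finite_prefix_lang) simp_all
  finally show ?thesis .
qed

text \<open>Strong induction on \<open>n\<close> using the recurrence: a block \<open>r\<close> with
  \<open>|r| \<le> n\<close> contributes at most \<open>lam^(n+L-|r|)\<close> words, a longer block at most one.\<close>
lemma card_prefix_lang_le:
  fixes R :: "'a::finite list set" and lam :: real
  assumes fin: "finite R" and blocks: "\<forall>r\<in>R. r \<noteq> [] \<and> length r \<le> L"
    and lam: "lam \<ge> 1" and kraft: "(\<Sum>r\<in>R. lam ^ (L - length r)) \<le> lam ^ L"
  shows "real (card (prefix_lang R n)) \<le> lam ^ (n + L)"
proof (induction n rule: less_induct)
  case (less n)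
  show ?case
  proof (cases "n = 0")
    case True
    have "prefix_lang R 0 \<subseteq> {[]}" by (auto simp: prefix_lang_def)
    then have "card (prefix_lang R 0) \<le> card {[] :: 'a list}" by (intro card_mono) auto
    moreover have "1 \<le> lam ^ L" using lam by (rule one_le_power)
    ultimately show ?thesis using True by simp
  next
    case False
    let ?A = "{r\<in>R. length r \<le> n}" and ?B = "{r\<in>R. n < length r}"
    let ?t = "\<lambda>r. lam ^ (n + L - length r)"
    have "real (card (prefix_lang R n))
            \<le> (\<Sum>r\<in>?A. real (card (prefix_lang R (n - length r)))) + real (card ?B)"
      using card_prefix_lang_recurrence[OF fin, of n] False
      by (simp add: of_nat_sum[symmetric] del: of_nat_sum)
    also have "\<dots> \<le> (\<Sum>r\<in>?A. ?t r) + (\<Sum>r\<in>?B. ?t r)"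
    proof (intro add_mono sum_mono)
      fix r assume r: "r \<in> ?A"
      then have "n - length r < n" using blocks False by fastforce
      then have "real (card (prefix_lang R (n - length r))) \<le> lam ^ (n - length r + L)"
        by (rule less.IH)
      then show "real (card (prefix_lang R (n - length r))) \<le> ?t r" using r by simp
    next
      show "real (card ?B) \<le> (\<Sum>r\<in>?B. ?t r)"
        using sum_mono[of ?B "\<lambda>_. 1" ?t] lam by (simp add: one_le_power)
    qed
    also have "\<dots> = (\<Sum>r\<in>R. lam ^ n * lam ^ (L - length r))"
      using fin blocks
      by (subst sum.union_disjoint[symmetric]) (auto simp: power_add[symmetric] intro!: sum.cong)
    also have "\<dots> \<le> lam ^ n * lam ^ L"
      using kraft lam by (simp add: sum_distrib_left[symmetric])
    finally show ?thesis by (simp add: power_add)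
  qed
qed

section \<open>Decomposition into the star root\<close>

lemma concat_of_concats:
  assumes "\<forall>w\<in>set ws. \<exists>xs. set xs \<subseteq> R \<and> concat xs = w"
  shows "\<exists>xs. set xs \<subseteq> R \<and> concat xs = concat ws"
  using assms
proof (induction ws)
  case (Cons a ws)
  then obtain xs ys where "set xs \<subseteq> R" "concat xs = a" "set ys \<subseteq> R" "concat ys = concat ws"
    by auto
  then show ?case by (intro exI[of _ "xs @ ys"]) auto
qed (intro exI[of _ "[]"], simp)

text \<open>For a set of nonempty words, every element is a concatenation of elements of its
  star root; induction on the length, since a proper factorisation has shorter factors.\<close>
lemma star_root_decomposition:
  assumes nonempty: "[] \<notin> P" and "v \<in> P"
  shows "\<exists>ws. set ws \<subseteq> star_root P \<and> concat ws = v"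
  using \<open>v \<in> P\<close>
proof (induction "length v" arbitrary: v rule: less_induct)
  case less
  show ?case
  proof (cases "v \<in> star_root P")
    case True then show ?thesis by (intro exI[of _ "[v]"]) auto
  next
    case False
    then obtain ws where ws: "length ws \<ge> 2" "set ws \<subseteq> P" "concat ws = v"
      using less.prems by (auto simp: star_root_def)
    have "\<exists>xs. set xs \<subseteq> star_root P \<and> concat xs = w" if w: "w \<in> set ws" for w
    proof -
      obtain xs ys where sp: "ws = xs @ w # ys" using w by (meson split_list)
      with ws(1) obtain z where z: "z \<in> set (xs @ ys)" by (cases "xs @ ys") auto
      then have "length z > 0" using ws(2) sp nonempty by auto
      moreover have "length z \<le> length (concat xs) + length (concat ys)"
        using z member_le_sum_list[of "length z" "map length (xs @ ys)"]
        by (auto simp: length_concat)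
      moreover have "length v = length (concat xs) + length w + length (concat ys)"
        using ws(3) sp by (metis concat.simps(2) concat_append length_append add.assoc)
      ultimately have "length w < length v" by linarith
      then show ?thesis using less.hyps w ws(2) by blast
    qed
    then show ?thesis using concat_of_concats ws(3) by blast
  qed
qed

text \<open>Facts about \<open>P_q\<close> and its star root: its elements are nonempty prefixes of \<open>q\<close>, and
  the root is nonempty since \<open>q \<in> P_q\<close> decomposes into root elements.\<close>
lemma Pq_nonempty_words: "[] \<notin> Pq q"
  by (simp add: Pq_def)

lemma star_root_Pq_blocks:
  "finite (star_root (Pq q)) \<and> (\<forall>r\<in>star_root (Pq q). r \<noteq> [] \<and> length r \<le> length q)"
proof -
  have "star_root (Pq q) \<subseteq> set (prefixes q)" by (auto simp: star_root_def Pq_def)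
  then show ?thesis
    by (auto simp: star_root_def Pq_def prefix_length_le intro: finite_subset)
qed

lemma star_root_Pq_nonempty:
  assumes "q \<noteq> []"
  shows "star_root (Pq q) \<noteq> {}"
proof -
  have "q \<in> Pq q" using assms by (auto simp: Pq_def strict_prefix_def)
  then obtain ws where "set ws \<subseteq> star_root (Pq q)" "concat ws = q"
    using star_root_decomposition[OF Pq_nonempty_words] by blast
  then show ?thesis using assms by (cases ws) auto
qed

section \<open>The positive root of the characteristic polynomial\<close>

definition block_poly :: "'a list set \<Rightarrow> nat \<Rightarrow> real \<Rightarrow> real" where
  "block_poly R L t = t ^ L - (\<Sum>r\<in>R. t ^ (L - length r))"

lemma char_poly_eq_block_poly: "char_poly q = block_poly (star_root (Pq q)) (length q)"
  by (simp add: fun_eq_iff char_poly_def block_poly_def)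

context
  fixes R :: "'a list set" and L :: nat
  assumes fin: "finite R" and ne: "R \<noteq> {}"
    and blocks: "\<forall>r\<in>R. r \<noteq> [] \<and> length r \<le> L"
begin

lemma block_poly_root_iff:
  assumes "t > 0"
  shows "block_poly R L t = 0 \<longleftrightarrow> (\<Sum>r\<in>R. (1 / t) ^ length r) = 1"
proof -
  have "(\<Sum>r\<in>R. t ^ (L - length r)) = t ^ L * (\<Sum>r\<in>R. (1 / t) ^ length r)"
    using blocks assms
    by (auto simp: sum_distrib_left power_diff power_one_over intro!: sum.cong)
  then show ?thesis using assms by (simp add: block_poly_def)
qed

text \<open>Since \<open>t \<mapsto> \<Sum>r\<in>R. (1/t)^|r|\<close> is strictly decreasing on \<open>t > 0\<close>, there is at most one
  positive root.\<close>
lemma block_poly_pos_root_unique: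
  assumes "0 < s" "0 < t" "block_poly R L s = 0" "block_poly R L t = 0"
  shows "s = t"
proof (rule ccontr)
  have decreasing: "(\<Sum>r\<in>R. (1 / y) ^ length r) < (\<Sum>r\<in>R. (1 / x) ^ length r)"
    if "0 < x" "x < y" for x y :: real
  proof (rule sum_strict_mono[OF fin ne])
    fix r assume "r \<in> R"
    then have "length r \<noteq> 0" using blocks by auto
    moreover have "1 / y < 1 / x" using that by (simp add: frac_less2)
    ultimately show "(1 / y) ^ length r < (1 / x) ^ length r"
      using that by (simp add: power_strict_mono)
  qed
  assume "s \<noteq> t"
  then show False
    using decreasing[of s t] decreasing[of t s] assms block_poly_root_iff
    by (cases "s < t") auto
qed

text \<open>Existence of a root \<open>\<ge> 1\<close> by the intermediate value theorem on \<open>[1, |R| + 1]\<close>.\<close>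
lemma block_poly_root_ge_1: "\<exists>t\<ge>1. block_poly R L t = 0"
proof -
  define N where "N = real (card R) + 1"
  have L: "L \<ge> 1"
  proof -
    obtain r where "r \<in> R" using ne by blast
    then show ?thesis using blocks by (cases r) auto
  qed
  have at_1: "block_poly R L 1 \<le> 0"
    using fin ne by (simp add: block_poly_def Suc_le_eq card_gt_0_iff)
  have at_N: "0 \<le> block_poly R L N"
  proof -
    have "(\<Sum>r\<in>R. N ^ (L - length r)) \<le> (\<Sum>r\<in>R. N ^ (L - 1))"
      using blocks by (intro sum_mono power_increasing diff_le_mono2)
        (auto simp: N_def Suc_le_eq)
    also have "\<dots> \<le> N * N ^ (L - 1)" by (simp add: N_def)
    also have "\<dots> = N ^ L" using L by (simp flip: power_Suc)
    finally show ?thesis by (simp add: block_poly_def)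
  qed
  have "\<forall>x. 1 \<le> x \<and> x \<le> N \<longrightarrow> isCont (block_poly R L) x"
    unfolding block_poly_def[abs_def] by (auto intro!: continuous_intros)
  then show ?thesis
    using IVT[of "block_poly R L" 1 0 N] at_1 at_N by (auto simp: N_def)
qed

end

text \<open>Hence \<open>lambda_q\<close> is the unique positive root; it is \<open>\<ge> 1\<close> and satisfies the
  equation needed by the counting bound.\<close>
lemma lambda_q_root:
  assumes "q \<noteq> []"
  shows "lambda_q q \<ge> 1"
    and "(\<Sum>r\<in>star_root (Pq q). lambda_q q ^ (length q - length r)) = lambda_q q ^ length q"
proof -
  let ?R = "star_root (Pq q)"
  note R = star_root_Pq_blocks[of q] star_root_Pq_nonempty[OF assms]
  obtain t where t: "t \<ge> 1" "block_poly ?R (length q) t = 0"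
    using block_poly_root_ge_1 R by blast
  have "x = t" if "x > 0" "block_poly ?R (length q) x = 0" for x
    using block_poly_pos_root_unique[of ?R "length q" x t] R t that by fastforce
  then have "{x. x > 0 \<and> char_poly q x = 0} = {t}"
    using t by (auto simp: char_poly_eq_block_poly)
  then have "lambda_q q = t" by (simp add: lambda_q_def)
  then show "lambda_q q \<ge> 1"
    and "(\<Sum>r\<in>?R. lambda_q q ^ (length q - length r)) = lambda_q q ^ length q"
    using t by (auto simp: block_poly_def)
qed

section \<open>Occurrences of the quasiperiod\<close>

lemma quasiperiodic_occurrence:
  assumes "quasiperiodic \<xi> q"
  shows "\<exists>p\<le>i. i < p + length q \<and> map \<xi> [p..<p + length q] = q"
proof -
  obtain u where u: "int i - int (length q) < int (length u)" "length u \<le> i"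
      "oprefix (u @ q) \<xi>"
    using assms unfolding quasiperiodic_def by blast
  have "map \<xi> [length u..<length u + length q] = q"
  proof (rule nth_equalityI)
    fix k assume "k < length (map \<xi> [length u..<length u + length q])"
    then show "map \<xi> [length u..<length u + length q] ! k = q ! k"
      using u(3) unfolding oprefix_def
      by (auto simp: nth_append dest!: spec[of _ "length u + k"])
  qed simp
  then show ?thesis using u(1,2) by (intro exI[of _ "length u"]) auto
qed

text \<open>After an occurrence of \<open>q\<close> at \<open>p\<close> there is one at \<open>p + d\<close> with \<open>0 < d \<le> |q|\<close> (the
  one covering position \<open>p + |q|\<close>); since the two occurrences overlap, the gap word
  \<open>\<xi>[p, p+d)\<close> is a prefix \<open>v\<close> of \<open>q\<close> with \<open>q\<close> a proper prefix of \<open>v q\<close>, i.e. \<open>v \<in> P_q\<close>.\<close>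
lemma next_occurrence_gap:
  assumes qp: "quasiperiodic \<xi> q" and occ: "map \<xi> [p..<p + length q] = q"
  obtains d where "0 < d" "map \<xi> [p + d..<p + d + length q] = q"
    "map \<xi> [p..<p + d] \<in> Pq q"
proof -
  define L where "L = length q"
  obtain p' where p': "p' \<le> p + L" "p + L < p' + L" "map \<xi> [p'..<p' + L] = q"
    using quasiperiodic_occurrence[OF qp, of "p + L"] unfolding L_def by blast
  define d where "d = p' - p"
  have d: "0 < d" "d \<le> L" "p' = p + d" using p' by (auto simp: d_def)
  define v where "v = map \<xi> [p..<p + d]"
  have vq: "v @ q = map \<xi> [p..<p + d + L]"
    using p'(3) d(3) by (simp add: v_def upt_add_eq_append[of p "p + d" L])
  have "take L (v @ q) = map \<xi> [p..<p + L]" unfolding vq by (simp add: take_map)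
  moreover have "take d (map \<xi> [p..<p + L]) = v" using d(2) by (simp add: v_def take_map)
  ultimately have "take L (v @ q) = q" "take d q = v" using occ by (simp_all add: L_def)
  then have "prefix q (v @ q)" "prefix v q" by (metis take_is_prefix)+
  moreover have "v \<noteq> []" using d(1) by (simp add: v_def)
  ultimately have "v \<in> Pq q" by (simp add: Pq_def strict_prefix_def)
  then show ?thesis using that d p'(3) by (simp add: v_def L_def)
qed

text \<open>Factors starting at an occurrence of \<open>q\<close> are prefixes of concatenations of blocks
  from the star root of \<open>P_q\<close>: chain the gap words of consecutive occurrences.\<close>
lemma factor_at_occurrence:
  assumes qp: "quasiperiodic \<xi> q" and occ: "map \<xi> [p..<p + length q] = q"
  shows "map \<xi> [p..<p + m] \<in> prefix_lang (star_root (Pq q)) m"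
  using occ
proof (induction m arbitrary: p rule: less_induct)
  case (less m)
  obtain d where d: "0 < d" "map \<xi> [p + d..<p + d + length q] = q"
    and gap: "map \<xi> [p..<p + d] \<in> Pq q"
    using next_occurrence_gap[OF qp less.prems] by blast
  obtain vs where vs: "set vs \<subseteq> star_root (Pq q)" "concat vs = map \<xi> [p..<p + d]"
    using star_root_decomposition[OF Pq_nonempty_words gap] by blast
  show ?case
  proof (cases "m < d")
    case True
    then have "prefix (map \<xi> [p..<p + m]) (concat vs)"
      using vs(2) by (metis take_is_prefix take_map take_upt add_le_cancel_left less_imp_le)
    then show ?thesis using vs(1) by (auto simp: prefix_lang_def)
  next
    case False
    have "map \<xi> [p + d..<p + d + (m - d)] \<in> prefix_lang (star_root (Pq q)) (m - d)"
      using less.IH[of "m - d" "p + d"] d False by simp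
    then obtain ws where ws: "set ws \<subseteq> star_root (Pq q)"
        "prefix (map \<xi> [p + d..<p + d + (m - d)]) (concat ws)"
      by (auto simp: prefix_lang_def)
    have "map \<xi> [p..<p + m] = concat vs @ map \<xi> [p + d..<p + d + (m - d)]"
      using False vs(2) upt_add_eq_append[of p "p + d" "m - d"] by simp
    then have "prefix (map \<xi> [p..<p + m]) (concat (vs @ ws))" using ws(2) by simp
    then show ?thesis using vs(1) ws(1) by (auto simp: prefix_lang_def intro!: exI[of _ "vs @ ws"])
  qed
qed

lemma factors_subset_prefix_lang:
  assumes qp: "quasiperiodic \<xi> q"
  shows "infixes \<xi> \<inter> {w. length w = n}
           \<subseteq> (\<Union>k<length q. drop k ` prefix_lang (star_root (Pq q)) (n + k))"
proof
  fix w assume "w \<in> infixes \<xi> \<inter> {w. length w = n}"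
  then obtain i where w: "w = map \<xi> [i..<i + n]" by (auto simp: infixes_def)
  obtain p where p: "p \<le> i" "i < p + length q" "map \<xi> [p..<p + length q] = q"
    using quasiperiodic_occurrence[OF qp, of i] by blast
  have "map \<xi> [p..<p + (n + (i - p))] \<in> prefix_lang (star_root (Pq q)) (n + (i - p))"
    using factor_at_occurrence[OF qp p(3)] by blast
  moreover have "drop (i - p) (map \<xi> [p..<p + (n + (i - p))]) = w"
    using p(1) w by (simp add: drop_map add.commute)
  moreover have "i - p < length q" using p by simp
  ultimately show "w \<in> (\<Union>k<length q. drop k ` prefix_lang (star_root (Pq q)) (n + k))"
    by force
qed

section \<open>The complexity bound\<close>

text \<open>For a single quasiperiodic word: count the factors of length \<open>n\<close> through the
  at most \<open>|q|\<close> sets \<open>prefix_lang R (n + k)\<close>, each of size at most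
  \<open>\<lambda>^(n+k+|q|) \<le> \<lambda>^(n+2|q|)\<close>.\<close>
lemma subword_complexity_quasiperiodic_le:
  fixes \<xi> :: "nat \<Rightarrow> 'a::finite"
  assumes q: "q \<noteq> []" and qp: "quasiperiodic \<xi> q"
  shows "real (subword_complexity \<xi> n)
           \<le> real (length q) * lambda_q q ^ (2 * length q) * lambda_q q ^ n"
proof -
  define R where "R = star_root (Pq q)"
  define L where "L = length q"
  define lam where "lam = lambda_q q"
  have lam: "lam \<ge> 1" "(\<Sum>r\<in>R. lam ^ (L - length r)) = lam ^ L"
    using lambda_q_root[OF q] by (simp_all add: R_def L_def lam_def)
  have count: "real (card (prefix_lang R (n + k))) \<le> lam ^ (n + 2 * L)" if "k < L" for k
    using card_prefix_lang_le[of R L lam "n + k"] star_root_Pq_blocks[of q] lam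
      power_increasing[of "n + k + L" "n + 2 * L" lam] that
    by (simp add: R_def L_def)
  have "subword_complexity \<xi> n \<le> card (\<Union>k<L. drop k ` prefix_lang R (n + k))"
    unfolding subword_complexity_def using factors_subset_prefix_lang[OF qp]
    by (intro card_mono) (auto simp: R_def L_def intro: finite_prefix_lang)
  also have "\<dots> \<le> (\<Sum>k<L. card (prefix_lang R (n + k)))"
    by (intro order.trans[OF card_UN_le] sum_mono card_image_le finite_prefix_lang) simp_all
  finally have "real (subword_complexity \<xi> n) \<le> (\<Sum>k<L. real (card (prefix_lang R (n + k))))"
    by (metis (mono_tags) of_nat_le_iff of_nat_sum)
  also have "\<dots> \<le> (\<Sum>k<L. lam ^ (n + 2 * L))" by (intro sum_mono count) simp
  finally show ?thesis by (simp add: L_def lam_def power_add mult_ac)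
qed

theorem lemma6:
  fixes q :: "'a::finite list"
  assumes "CARD('a) \<ge> 2"
    and "q \<noteq> []"
  shows "\<exists>c>0. \<forall>\<xi> :: nat \<Rightarrow> 'a. quasiperiodic \<xi> q \<longrightarrow>
           (\<forall>n. real (subword_complexity \<xi> n) \<le> c * lambda_q q ^ n)"
proof -
  define c where "c = real (length q) * lambda_q q ^ (2 * length q)"
  have "c > 0" using assms(2) lambda_q_root(1)[OF assms(2)] by (simp add: c_def)
  moreover have "\<forall>\<xi> :: nat \<Rightarrow> 'a. quasiperiodic \<xi> q \<longrightarrow>
                   (\<forall>n. real (subword_complexity \<xi> n) \<le> c * lambda_q q ^ n)"
    using subword_complexity_quasiperiodic_le[OF assms(2)] by (simp add: c_def)
  ultimately show ?thesis by blast
qed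

end
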